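(* For every $\alpha\in(0,1)$, every set of $m$ statistical queries $\mathcal{Q}$ over a universe $U$ of size $N$ with query matrix $Q\in[0,1]^{m\times N}$, and every $n\in\mathbb{N}$, there exists \[ s=\frac5\alpha\cdot\mathrm{hdisc}^*(Q,n) \] such that for every dataset $x\in U^n$ whose elements are all distinct, there exists a dataset $y\in U^*$ of size at most $s$ with $\|\mathcal{Q}(x)-\mathcal{Q}(y)\|_\infty\le\alpha$.
   Context: A statistical query is $q:U\to\mathbb{R}$ with $q(x)=\frac1{|x|}\sum_{i}q(x_i)$ for a dataset $x$ (a finite sequence of elements of $U$); $\mathcal{Q}(x)=(q_1(x),\ldots,q_m(x))$; the query matrix has $i$-th row $(q_i(u))_{u\in U}$. $U^*$ denotes finite sequences over $U$. For an $m\times N$ matrix $Q$, $Q^*$ is the $(m+1)\times N$ matrix obtained by appending the all-ones row, $Q^*_S$ is its submatrix of columns in $S$, and $\mathrm{hdisc}^*(Q,w)=\max_{S\subseteq[N],|S|\le w}\min_{z\in\{\pm1\}^S}\|Q^*_Sz\|_\infty$. *)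

theory Defs
  imports Complex_Main "HOL-Library.FuncSet"
begin

definition sq_eval :: "('u \<Rightarrow> real) \<Rightarrow> 'u list \<Rightarrow> real" where
  "sq_eval q xs = (\<Sum>u\<leftarrow>xs. q u) / real (length xs)"

definition Qstar :: "nat \<Rightarrow> (nat \<Rightarrow> 'u \<Rightarrow> real) \<Rightarrow> nat \<Rightarrow> 'u \<Rightarrow> real" where
  "Qstar m q i u = (if i < m then q i u else 1)"

definition disc_star :: "nat \<Rightarrow> (nat \<Rightarrow> 'u \<Rightarrow> real) \<Rightarrow> 'u set \<Rightarrow> real" where
  "disc_star m q S =
     Min ((\<lambda>z. Max ((\<lambda>i. \<bar>\<Sum>u\<in>S. Qstar m q i u * z u\<bar>) ` {..m}))
          ` (S \<rightarrow>\<^sub>E {-1, 1}))"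

definition hdisc_star :: "nat \<Rightarrow> (nat \<Rightarrow> 'u::finite \<Rightarrow> real) \<Rightarrow> nat \<Rightarrow> real" where
  "hdisc_star m q w = Max (disc_star m q ` {S. card S \<le> w})"

end

theory Submission
  imports Defs
begin

text \<open>Repeated halving. Let D bound the discrepancy of every subset of the data set S. A signing
  of S of discrepancy at most D splits it into two parts whose sizes, and whose sums of each
  query, differ by at most D. Keeping the larger part P gives |S|/2 \<le> |P| \<le> (|S| + D)/2 and
  moves every query average by at most 2D/|S|. While |S| > 5D/\<alpha> we have D < |S|/5, so
  |P| \<le> 3|S|/5 and 2D/|S| + (\<alpha> - 3D/|P|) \<le> \<alpha> - 3D/|S|: the error accumulated from S on is at
  most \<alpha> - 3D/|S|, and the process stops at a set of size at most 5D/\<alpha>.\<close>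

definition set_average :: "('u \<Rightarrow> real) \<Rightarrow> 'u set \<Rightarrow> real" where
  "set_average f A = (\<Sum>u\<in>A. f u) / real (card A)"

lemma sq_eval_distinct: "distinct xs \<Longrightarrow> sq_eval f xs = set_average f (set xs)"
  by (simp add: sq_eval_def set_average_def sum_list_distinct_conv_sum_set distinct_card)

lemma abs_mean_merge_le:
  fixes p r a b D :: real
  assumes "0 < p" "0 \<le> r" "r \<le> p" "0 \<le> a" "a \<le> p"
    and "\<bar>p - r\<bar> \<le> D" "\<bar>a - b\<bar> \<le> D"
  shows "\<bar>(a + b) / (p + r) - a / p\<bar> \<le> 2 * D / (p + r)"
proof -
  have pos: "0 < p * (p + r)" using assms(1,2) by simp
  have "\<bar>p * (b - a)\<bar> \<le> p * D"
    using assms(1,7) by (simp add: abs_mult abs_minus_commute)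
  moreover have "\<bar>(p - r) * a\<bar> \<le> D * p"
    using assms(4-6) unfolding abs_mult by (intro mult_mono) auto
  ultimately have numerator: "\<bar>p * (b - a) + (p - r) * a\<bar> \<le> (2 * D) * p"
    using abs_triangle_ineq[of "p * (b - a)" "(p - r) * a"] mult.commute[of D p] by linarith
  have "(a + b) / (p + r) - a / p = (p * (b - a) + (p - r) * a) / (p * (p + r))"
    using assms(1,2) by (simp add: field_simps)
  then have "\<bar>(a + b) / (p + r) - a / p\<bar> = \<bar>p * (b - a) + (p - r) * a\<bar> / (p * (p + r))"
    using pos by simp
  also have "\<dots> \<le> (2 * D) * p / (p * (p + r))"
    using numerator pos by (intro divide_right_mono) auto
  also have "\<dots> = 2 * D / (p + r)"
    using assms(1) by simp
  finally show ?thesis .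
qed

lemma set_average_union_close:
  fixes f :: "'u \<Rightarrow> real"
  assumes "finite X" "finite Y" "X \<inter> Y = {}" "X \<noteq> {}" "card Y \<le> card X"
    and "\<forall>u\<in>X. 0 \<le> f u \<and> f u \<le> 1"
    and "\<bar>real (card X) - real (card Y)\<bar> \<le> D"
    and "\<bar>(\<Sum>u\<in>X. f u) - (\<Sum>u\<in>Y. f u)\<bar> \<le> D"
  shows "\<bar>set_average f (X \<union> Y) - set_average f X\<bar> \<le> 2 * D / real (card (X \<union> Y))"
proof -
  have "(\<Sum>u\<in>X. f u) \<le> real (card X)"
    using assms(6) sum_mono[of X f "\<lambda>_. 1"] by simp
  moreover have "0 \<le> (\<Sum>u\<in>X. f u)" using assms(6) by (simp add: sum_nonneg)
  moreover have "0 < real (card X)" using assms(1,4) by (simp add: card_gt_0_iff)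
  ultimately have "\<bar>((\<Sum>u\<in>X. f u) + (\<Sum>u\<in>Y. f u)) / (real (card X) + real (card Y))
      - (\<Sum>u\<in>X. f u) / real (card X)\<bar> \<le> 2 * D / (real (card X) + real (card Y))"
    using assms(5,7,8) by (intro abs_mean_merge_le) auto
  then show ?thesis
    using assms(1-3) by (simp add: set_average_def card_Un_disjoint sum.union_disjoint)
qed

lemma disc_star_witness:
  assumes "finite S"
  obtains z where "z \<in> S \<rightarrow>\<^sub>E {-1, 1}"
    and "\<And>i. i \<le> m \<Longrightarrow> \<bar>\<Sum>u\<in>S. Qstar m q i u * z u\<bar> \<le> disc_star m q S"
proof -
  let ?f = "\<lambda>z. Max ((\<lambda>i. \<bar>\<Sum>u\<in>S. Qstar m q i u * z u\<bar>) ` {..m})"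
  have "finite (S \<rightarrow>\<^sub>E ({-1, 1} :: real set))" "S \<rightarrow>\<^sub>E ({-1, 1} :: real set) \<noteq> {}"
    using assms by (auto intro: finite_PiE simp: PiE_eq_empty_iff)
  then have "disc_star m q S \<in> ?f ` (S \<rightarrow>\<^sub>E {-1, 1})"
    unfolding disc_star_def by (intro Min_in) auto
  then obtain z where z: "z \<in> S \<rightarrow>\<^sub>E {-1, 1}" "?f z = disc_star m q S"
    by auto
  moreover have "\<bar>\<Sum>u\<in>S. Qstar m q i u * z u\<bar> \<le> ?f z" if "i \<le> m" for i
    using that by (intro Max_ge) auto
  ultimately show ?thesis using that by auto
qed

lemma disc_star_nonneg:
  assumes "finite S"
  shows "0 \<le> disc_star m q S"
proof -
  obtain z where "\<bar>\<Sum>u\<in>S. Qstar m q 0 u * z u\<bar> \<le> disc_star m q S"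
    using disc_star_witness[OF assms] by blast
  then show ?thesis by linarith
qed

lemma disc_star_le_hdisc_star:
  fixes q :: "nat \<Rightarrow> 'u::finite \<Rightarrow> real"
  shows "card S \<le> w \<Longrightarrow> disc_star m q S \<le> hdisc_star m q w"
  unfolding hdisc_star_def by (intro Max_ge) auto

lemma hdisc_star_nonneg:
  fixes q :: "nat \<Rightarrow> 'u::finite \<Rightarrow> real"
  shows "0 \<le> hdisc_star m q w"
  using disc_star_nonneg[of "{}" m q] disc_star_le_hdisc_star[of "{}" w m q] by simp

text \<open>The parts are the preimages of +1 and -1 under an optimal signing; the all-ones row
  of Q* is what bounds the difference of their sizes.\<close>
lemma disc_star_balanced_partition:
  assumes "finite S"
  obtains A B where "A \<inter> B = {}" "A \<union> B = S" "card B \<le> card A"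
    and "\<bar>real (card A) - real (card B)\<bar> \<le> disc_star m q S"
    and "\<And>i. i < m \<Longrightarrow> \<bar>(\<Sum>u\<in>A. q i u) - (\<Sum>u\<in>B. q i u)\<bar> \<le> disc_star m q S"
proof -
  obtain z where z: "z \<in> S \<rightarrow>\<^sub>E {-1, 1}"
    and zb: "\<And>i. i \<le> m \<Longrightarrow> \<bar>\<Sum>u\<in>S. Qstar m q i u * z u\<bar> \<le> disc_star m q S"
    using disc_star_witness[OF assms] by blast
  define P where "P = S \<inter> {u. z u = 1}"
  define M where "M = S - {u. z u = 1}"
  have M_neg: "z u = -1" if "u \<in> M" for u
    using that z by (auto simp: M_def PiE_def Pi_def)
  have signed_sum: "(\<Sum>u\<in>S. f u * z u) = (\<Sum>u\<in>P. f u) - (\<Sum>u\<in>M. f u)" for f :: "_ \<Rightarrow> real"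
  proof -
    have "(\<Sum>u\<in>S. f u * z u) = (\<Sum>u\<in>P. f u * z u) + (\<Sum>u\<in>M. f u * z u)"
      unfolding P_def M_def using assms by (rule sum.Int_Diff)
    also have "\<dots> = (\<Sum>u\<in>P. f u) + (\<Sum>u\<in>M. - f u)"
      by (intro arg_cong2[of _ _ _ _ "(+)"] sum.cong) (auto simp: P_def M_neg)
    finally show ?thesis by (simp add: sum_negf)
  qed
  have PM: "P \<inter> M = {}" "P \<union> M = S" by (auto simp: P_def M_def)
  have card_diff: "\<bar>real (card P) - real (card M)\<bar> \<le> disc_star m q S"
    using zb[of m] signed_sum[of "Qstar m q m"] by (simp add: Qstar_def)
  have sum_diff: "\<bar>(\<Sum>u\<in>P. q i u) - (\<Sum>u\<in>M. q i u)\<bar> \<le> disc_star m q S" if "i < m" for i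
    using that zb[of i] signed_sum[of "q i"] by (simp add: Qstar_def)
  show ?thesis
  proof (cases "card M \<le> card P")
    case True
    then show ?thesis using that PM card_diff sum_diff by blast
  next
    case False
    then show ?thesis
      using that[of M P] PM card_diff sum_diff by (auto simp: abs_minus_commute)
  qed
qed

lemma disc_star_halving:
  assumes "finite S" "S \<noteq> {}" "\<forall>i<m. \<forall>u. 0 \<le> q i u \<and> q i u \<le> 1"
  obtains P where "P \<subseteq> S" "real (card S) / 2 \<le> real (card P)"
    and "real (card P) \<le> (real (card S) + disc_star m q S) / 2"
    and "\<And>i. i < m \<Longrightarrow>
      \<bar>set_average (q i) S - set_average (q i) P\<bar> \<le> 2 * disc_star m q S / real (card S)"
proof -
  obtain A B where AB: "A \<inter> B = {}" "A \<union> B = S" "card B \<le> card A"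
    and card_diff: "\<bar>real (card A) - real (card B)\<bar> \<le> disc_star m q S"
    and sum_diff: "\<And>i. i < m \<Longrightarrow> \<bar>(\<Sum>u\<in>A. q i u) - (\<Sum>u\<in>B. q i u)\<bar> \<le> disc_star m q S"
    using disc_star_balanced_partition[OF assms(1), where m = m and q = q] by metis
  have fin: "finite A" "finite B" using AB(2) assms(1) by auto
  have card_S: "card S = card A + card B" using AB fin by (metis card_Un_disjoint)
  have "A \<noteq> {}" using AB assms(2) fin card_S by fastforce
  then have "\<bar>set_average (q i) S - set_average (q i) A\<bar> \<le> 2 * disc_star m q S / real (card S)"
    if "i < m" for i
    using set_average_union_close[OF fin AB(1) _ AB(3) _ card_diff sum_diff] that assms(3) AB(2)
    by blast
  moreover have "A \<subseteq> S" using AB(2) by blast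
  ultimately show ?thesis using that card_S AB(3) card_diff by simp
qed

lemma halving_error_budget:
  fixes k k' D \<alpha> :: real
  assumes "0 < k'" "k' \<le> 3 * k / 5" "0 \<le> D" "5 * D < \<alpha> * k"
  shows "2 * D / k + max 0 (\<alpha> - 3 * D / k') \<le> \<alpha> - 3 * D / k"
proof -
  have "0 < k" using assms(1,2) by linarith
  have "5 * D / k = 3 * D / (3 * k / 5)" by simp
  also have "\<dots> \<le> 3 * D / k'"
    using assms(1-3) by (intro divide_left_mono) auto
  finally have "5 * D / k \<le> 3 * D / k'" .
  moreover have "5 * D / k \<le> \<alpha>" using assms(4) \<open>0 < k\<close> by (simp add: pos_divide_le_eq)
  moreover have "2 * D / k + 3 * D / k = 5 * D / k" by (simp add: add_divide_distrib[symmetric])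
  ultimately show ?thesis by linarith
qed

lemma hereditary_disc_small_subset:
  assumes "finite S" "S \<noteq> {}" "\<forall>i<m. \<forall>u. 0 \<le> q i u \<and> q i u \<le> 1"
    and "0 < \<alpha>" "\<alpha> \<le> 1"
    and disc: "\<And>S'. S' \<subseteq> S \<Longrightarrow> disc_star m q S' \<le> D"
  shows "\<exists>T\<subseteq>S. T \<noteq> {} \<and> real (card T) \<le> 5 / \<alpha> * D \<and>
           (\<forall>i<m. \<bar>set_average (q i) S - set_average (q i) T\<bar> \<le> max 0 (\<alpha> - 3 * D / real (card S)))"
  using assms(1,2) disc
proof (induction "card S" arbitrary: S rule: less_induct)
  case less
  define k where "k = real (card S)"
  have k_pos: "0 < k" using less.prems(1,2) by (simp add: k_def card_gt_0_iff)
  have D_nonneg: "0 \<le> D"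
    using less.prems(3)[of "{}"] disc_star_nonneg[of "{}" m q] by simp
  show ?case
  proof (cases "k \<le> 5 / \<alpha> * D")
    case True
    then show ?thesis using less.prems(2) by (auto simp: k_def)
  next
    case False
    then have "5 * D / \<alpha> < k" by simp
    then have large: "5 * D < \<alpha> * k" using assms(4) by (simp add: pos_divide_less_eq mult.commute)
    then have "5 * D < k" using mult_left_le_one_le[of k \<alpha>] assms(4,5) k_pos by linarith
    obtain P where P: "P \<subseteq> S" "k / 2 \<le> real (card P)"
      and P_size: "real (card P) \<le> (k + disc_star m q S) / 2"
      and P_close: "\<And>i. i < m \<Longrightarrow>
        \<bar>set_average (q i) S - set_average (q i) P\<bar> \<le> 2 * disc_star m q S / k"
      using disc_star_halving[OF less.prems(1,2) assms(3)] unfolding k_def by blast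
    have disc_S: "disc_star m q S \<le> D" using less.prems(3) by blast
    define k' where "k' = real (card P)"
    have shrink: "k' \<le> 3 * k / 5" using P_size disc_S \<open>5 * D < k\<close> by (simp add: k'_def)
    have "0 < k'" using P(2) k_pos by (simp add: k'_def)
    then have "P \<noteq> {}" "card P < card S" using shrink k_pos by (auto simp: k'_def k_def)
    moreover have "finite P" using P(1) less.prems(1) finite_subset by blast
    ultimately obtain T where T: "T \<subseteq> P" "T \<noteq> {}" "real (card T) \<le> 5 / \<alpha> * D"
      and T_close: "\<forall>i<m. \<bar>set_average (q i) P - set_average (q i) T\<bar> \<le> max 0 (\<alpha> - 3 * D / k')"
      using less.hyps less.prems(3) P(1) unfolding k'_def by (meson order_trans)
    have "2 * disc_star m q S / k \<le> 2 * D / k"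
      using disc_S k_pos by (simp add: divide_right_mono)
    have "\<bar>set_average (q i) S - set_average (q i) T\<bar> \<le> \<alpha> - 3 * D / k" if "i < m" for i
    proof -
      have "\<bar>set_average (q i) S - set_average (q i) T\<bar>
          \<le> \<bar>set_average (q i) S - set_average (q i) P\<bar> + \<bar>set_average (q i) P - set_average (q i) T\<bar>"
        by linarith
      also have "\<dots> \<le> 2 * D / k + max 0 (\<alpha> - 3 * D / k')"
        using P_close[OF that] T_close that \<open>2 * disc_star m q S / k \<le> 2 * D / k\<close> by fastforce
      also have "\<dots> \<le> \<alpha> - 3 * D / k"
        by (rule halving_error_budget[OF \<open>0 < k'\<close> shrink D_nonneg large])
      finally show ?thesis .
    qed
    then have "\<forall>i<m. \<bar>set_average (q i) S - set_average (q i) T\<bar> \<le> max 0 (\<alpha> - 3 * D / k)"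
      by (meson max.cobounded2 order_trans)
    moreover have "T \<subseteq> S" using T(1) P(1) by blast
    ultimately show ?thesis using T(2,3) unfolding k_def by blast
  qed
qed

theorem theorem6p8:
  fixes \<alpha> :: real and m n :: nat and q :: "nat \<Rightarrow> 'u::finite \<Rightarrow> real"
  assumes "0 < \<alpha>" and "\<alpha> < 1"
    and "\<forall>i<m. \<forall>u. 0 \<le> q i u \<and> q i u \<le> 1"
    and "1 \<le> n"
  shows "\<forall>x :: 'u list. length x = n \<and> distinct x \<longrightarrow>
           (\<exists>y :: 'u list. y \<noteq> [] \<and> real (length y) \<le> 5 / \<alpha> * hdisc_star m q n \<and>
              (\<forall>i<m. \<bar>sq_eval (q i) x - sq_eval (q i) y\<bar> \<le> \<alpha>))"
proof (intro allI impI)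
  fix x :: "'u list"
  assume x: "length x = n \<and> distinct x"
  then have card_x: "card (set x) = n" by (simp add: distinct_card)
  let ?D = "hdisc_star m q n"
  have "disc_star m q S \<le> ?D" if "S \<subseteq> set x" for S
    using that card_x card_mono[of "set x" S] by (intro disc_star_le_hdisc_star) auto
  moreover have "set x \<noteq> {}" using card_x assms(4) by auto
  ultimately have "\<exists>T\<subseteq>set x. T \<noteq> {} \<and> real (card T) \<le> 5 / \<alpha> * ?D \<and>
      (\<forall>i<m. \<bar>set_average (q i) (set x) - set_average (q i) T\<bar>
               \<le> max 0 (\<alpha> - 3 * ?D / real (card (set x))))"
    by (intro hereditary_disc_small_subset assms(1,3)) (use assms(2) in auto)
  then obtain T where T: "T \<subseteq> set x" "T \<noteq> {}" "real (card T) \<le> 5 / \<alpha> * ?D"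
    and close: "\<And>i. i < m \<Longrightarrow>
      \<bar>set_average (q i) (set x) - set_average (q i) T\<bar> \<le> max 0 (\<alpha> - 3 * ?D / n)"
    unfolding card_x by blast
  have error: "max 0 (\<alpha> - 3 * ?D / n) \<le> \<alpha>" using hdisc_star_nonneg[of m q n] assms(1) by simp
  obtain y where y: "set y = T" "distinct y" using finite_distinct_list[OF finite] by blast
  have "\<bar>sq_eval (q i) x - sq_eval (q i) y\<bar> \<le> \<alpha>" if "i < m" for i
    using order_trans[OF close[OF that] error] x y by (simp add: sq_eval_distinct)
  moreover have "y \<noteq> []" using T(2) y(1) by auto
  moreover have "real (length y) \<le> 5 / \<alpha> * ?D" using T(3) distinct_card[OF y(2)] y(1) by simp
  ultimately show "\<exists>y. y \<noteq> [] \<and> real (length y) \<le> 5 / \<alpha> * ?D \<and>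
                     (\<forall>i<m. \<bar>sq_eval (q i) x - sq_eval (q i) y\<bar> \<le> \<alpha>)"
    by blast
qed

end
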